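(* Assume $C\succ 0$ and $A_1,\dots,A_m$ are linearly independent. Let $X(t)$ be a differentiable solution of the second-ansatz dynamics $$\mathrm{vec}(\dot X) = -\bigl(I - G\mathcal{A}^T(\mathcal{A}G\mathcal{A}^T)^{-1} \mathcal{A}\bigr)G\,\mathrm{vec}(C),\qquad G=X\otimes X,$$ with $X(0)\succ 0$ linearly feasible. Then $X(t)\succ 0$ for every finite time $t\ge 0$ (and $X(t)$ remains linearly feasible).
   Context: We consider the SDP $\min\{\mathrm{tr}(CX): \mathrm{tr}(A_\ell X)=b_\ell\ \forall\ell\in[m],\ X\succeq 0\}$ with symmetric $n\times n$ matrices $C,A_1,\dots,A_m$ and $b\in\mathbb{R}^m$. For an $n\times n$ matrix $M$, $\mathrm{vec}(M)\in\mathbb{R}^{n^2}$ is obtained by stacking the columns of $M$; $\otimes$ is the Kronecker product. $\mathcal{A}$ is the $m\times n^2$ matrix whose $\ell$-th row is $\mathrm{vec}(A_\ell)^T$. A matrix $X$ is linearly feasible if $\mathcal{A}\,\mathrm{vec}(X)=b$. *)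

theory Defs
  imports "HOL-Analysis.Analysis"
begin

definition pos_def :: "real^'n^'n \<Rightarrow> bool" where
  "pos_def M \<longleftrightarrow> transpose M = M \<and> (\<forall>x. x \<noteq> 0 \<longrightarrow> x \<bullet> (M *v x) > 0)"

text \<open>Column-stacking vectorisation. The index (j,i) = (column, row); with the
  lexicographic order on pairs this is exactly the column stacking order.\<close>
definition vecm :: "real^'n^'n \<Rightarrow> real^('n \<times> 'n)" where
  "vecm M = (\<chi> p. M $ snd p $ fst p)"

text \<open>Kronecker product, with (block index, inner index) pair indexing, consistent with vecm.\<close>
definition kron :: "real^'n^'n \<Rightarrow> real^'n^'n \<Rightarrow> real^('n \<times> 'n)^('n \<times> 'n)" where
  "kron P Q = (\<chi> p q. P $ fst p $ fst q * Q $ snd p $ snd q)"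

definition constr_mat :: "('m \<Rightarrow> real^'n^'n) \<Rightarrow> real^('n \<times> 'n)^'m" where
  "constr_mat A = (\<chi> l. vecm (A l))"

end

theory Submission
  imports Defs
begin

text \<open>The vectorised dynamics is \<open>X' = -X S(X) X\<close>, where \<open>S(X) = C - \<Sum>\<^sub>l y\<^sub>l(X) A\<^sub>l\<close> is
  the dual slack whose multipliers keep the flow tangent to the affine constraints. While \<open>X\<close>
  stays positive definite the constraints are conserved and
  \<open>\<Phi> = tr(X\<^sup>-\<^sup>1 X(0)) + tr(C X)/2 - (tr(C X(0)) + n/2) t\<close> is nonincreasing: its derivative is
  \<open>tr(S X(0)) - tr(S X S X)/2 - tr(C X(0)) - n/2\<close>, feasibility turns \<open>tr(S X(0))\<close> into
  \<open>tr(C X(0)) - tr(C X) + tr(S X)\<close>, and \<open>2 tr(S X) \<le> n + tr(S X S X)\<close>. Hence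
  \<open>tr(X\<^sup>-\<^sup>1 X(0))\<close> stays bounded on bounded time intervals, and by Cauchy-Schwarz
  \<open>X(0) \<le> tr(X\<^sup>-\<^sup>1 X(0)) X\<close>, so \<open>X\<close> is uniformly positive definite up to any finite time
  and cannot leave the cone.\<close>

section \<open>Matrices as vectors\<close>

lemma sum_UNIV_prod: "(\<Sum>p\<in>UNIV. f p) = (\<Sum>a\<in>UNIV. \<Sum>b\<in>UNIV. f (a, b))"
  for f :: "'a::finite \<times> 'b::finite \<Rightarrow> 'c::comm_monoid_add"
  by (simp add: sum.cartesian_product UNIV_Times_UNIV[symmetric] del: UNIV_Times_UNIV)

lemma vecm_inner [simp]: "vecm M \<bullet> vecm N = M \<bullet> N"
  by (simp add: inner_vec_def vecm_def sum_UNIV_prod) (rule sum.swap)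

lemma vecm_inject: "vecm M = vecm N \<longleftrightarrow> M = N"
  by (auto simp: vecm_def vec_eq_iff)

lemma vecm_diff: "vecm (M - N) = vecm M - vecm N"
  by (simp add: vecm_def vec_eq_iff)

lemma vecm_uminus: "vecm (- M) = - vecm M"
  by (simp add: vecm_def vec_eq_iff)

lemma linear_vecm: "linear vecm"
  by (rule linearI) (simp_all add: vecm_def vec_eq_iff)

lemma kron_mult_vecm: "kron P Q *v vecm M = vecm (Q ** M ** transpose P)"
  by (simp add: kron_def vecm_def matrix_vector_mult_def matrix_matrix_mult_def transpose_def
       vec_eq_iff sum_UNIV_prod sum_distrib_left sum_distrib_right mult_ac)

lemma constr_mat_mult_vecm: "constr_mat A *v vecm M = (\<chi> l. A l \<bullet> M)"
proof -
  have "(constr_mat A *v v) $ l = vecm (A l) \<bullet> v" for v l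
    by (simp add: constr_mat_def matrix_vector_mult_def inner_vec_def)
  then show ?thesis by (simp add: vec_eq_iff)
qed

lemma transpose_constr_mat_mult: "transpose (constr_mat A) *v y = vecm (\<Sum>l\<in>UNIV. y $ l *\<^sub>R A l)"
  by (simp add: constr_mat_def matrix_vector_mult_def transpose_def vecm_def vec_eq_iff
      sum_component mult.commute)

lemma inner_constr_mat_mult: "y \<bullet> (constr_mat A *v vecm M) = (\<Sum>l\<in>UNIV. y $ l *\<^sub>R A l) \<bullet> M"
  by (simp add: constr_mat_mult_vecm inner_vec_def[of y] inner_sum_left)

lemma independent_combination_eq_0:
  fixes A :: "'m::finite \<Rightarrow> 'a::real_vector"
  assumes "inj A" and "independent (range A)" and "(\<Sum>l\<in>UNIV. y $ l *\<^sub>R A l) = 0"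
  shows "y = 0"
proof -
  define u where "u v = y $ inv A v" for v
  have "(\<Sum>v\<in>range A. u v *\<^sub>R v) = (\<Sum>l\<in>UNIV. y $ l *\<^sub>R A l)"
    using assms(1) by (simp add: sum.reindex u_def)
  then have "u (A l) = 0" for l
    using assms(2,3) by (intro independentD[of "range A"]) auto
  then show ?thesis using assms(1) by (simp add: u_def vec_eq_iff)
qed

lemma matrix_diff_ldistrib: "A ** (B - C) = A ** B - A ** C" for A :: "real^'n^'m"
  by (vector matrix_matrix_mult_def sum_subtractf field_simps)

lemma matrix_diff_rdistrib: "(B - C) ** A = B ** A - C ** A" for A :: "real^'n^'m"
  by (vector matrix_matrix_mult_def sum_subtractf field_simps)

lemma matrix_vector_mult_uminus: "(- A) *v x = - (A *v x)" for A :: "real^'n^'m"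
  by (simp add: matrix_vector_mult_def vec_eq_iff sum_negf)

lemma transpose_diff: "transpose (M - N) = transpose M - transpose N"
  by (simp add: transpose_def vec_eq_iff)

lemma transpose_uminus: "transpose (- M) = - transpose M"
  by (simp add: transpose_def vec_eq_iff)

lemma bounded_linear_transpose: "bounded_linear (transpose :: real^'n^'m \<Rightarrow> real^'m^'n)"
  by (intro linear_conv_bounded_linear[THEN iffD1] linearI) (simp_all add: transpose_def vec_eq_iff)

lemma symmetric_nth:
  assumes "transpose M = M"
  shows "M $ i $ j = M $ j $ i"
proof -
  have "transpose M $ j $ i = M $ j $ i" using assms by simp
  then show ?thesis by (simp add: transpose_def)
qed

lemma inner_matrix_vector_mult: "x \<bullet> (M *v y) = (transpose M *v x) \<bullet> y" for M :: "real^'n^'m"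
  by (simp add: dot_lmul_matrix)

lemma inner_matrix_vector_mult_expand:
  "x \<bullet> (M *v y) = (\<Sum>i\<in>UNIV. \<Sum>j\<in>UNIV. x $ i * M $ i $ j * y $ j)" for M :: "real^'n^'m"
  by (simp add: inner_vec_def matrix_vector_mult_def sum_distrib_left mult_ac)

lemma symmetric_inner_commute: "transpose M = M \<Longrightarrow> x \<bullet> (M *v y) = y \<bullet> (M *v x)"
  for M :: "real^'n^'n"
  by (metis inner_commute inner_matrix_vector_mult)

lemma quadratic_form_axis [simp]: "axis i 1 \<bullet> (M *v axis j 1) = M $ i $ j" for M :: "real^'n^'m"
  by (simp add: matrix_vector_mult_basis inner_commute[of "axis i 1"] inner_axis column_def)

lemma inner_transpose [simp]: "transpose M \<bullet> transpose N = M \<bullet> N" for M N :: "real^'n^'m"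
  by (simp add: inner_vec_def transpose_def) (rule sum.swap)

lemma inner_matrix_mult_left: "M \<bullet> (P ** N) = (transpose P ** M) \<bullet> N" for M N P :: "real^'n^'n"
proof -
  have "M \<bullet> (P ** N) = (\<Sum>i\<in>UNIV. \<Sum>k\<in>UNIV. \<Sum>j\<in>UNIV. M $ i $ j * P $ i $ k * N $ k $ j)"
    by (simp add: inner_vec_def matrix_matrix_mult_def sum_distrib_left mult_ac)
       (rule sum.cong[OF refl], rule sum.swap)
  also have "\<dots> = (\<Sum>k\<in>UNIV. \<Sum>i\<in>UNIV. \<Sum>j\<in>UNIV. M $ i $ j * P $ i $ k * N $ k $ j)"
    by (rule sum.swap)
  also have "\<dots> = (transpose P ** M) \<bullet> N"
    by (simp add: inner_vec_def matrix_matrix_mult_def transpose_def sum_distrib_left mult_ac)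
       (rule sum.cong[OF refl], rule sum.swap)
  finally show ?thesis .
qed

lemma inner_matrix_mult_right: "M \<bullet> (N ** P) = (M ** transpose P) \<bullet> N" for M N P :: "real^'n^'n"
proof -
  have "M \<bullet> (N ** P) = transpose M \<bullet> (transpose P ** transpose N)"
    by (subst inner_transpose[symmetric]) (simp only: matrix_transpose_mul)
  also have "\<dots> = (P ** transpose M) \<bullet> transpose N"
    by (simp only: inner_matrix_mult_left transpose_transpose)
  also have "\<dots> = (M ** transpose P) \<bullet> N"
    by (subst inner_transpose[symmetric]) (simp only: matrix_transpose_mul transpose_transpose)
  finally show ?thesis .
qed

lemma inner_mat_1_self: "(mat 1 :: real^'n^'n) \<bullet> mat 1 = real CARD('n)"
  by (simp add: inner_vec_def mat_def if_distrib[of "\<lambda>x. x * _"] cong: if_cong)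

lemma matrix_inv_right: "invertible A \<Longrightarrow> A ** matrix_inv A = mat 1"
  and matrix_inv_left: "invertible A \<Longrightarrow> matrix_inv A ** A = mat 1"
  for A :: "real^'n^'n"
  unfolding invertible_def matrix_inv_def by (metis (mono_tags, lifting) someI_ex)+

lemma norm_matrix_vector_mult_le: "norm (D *v v) \<le> norm D * norm v" for D :: "real^'n^'m"
proof (rule power2_le_imp_le)
  have "(D *v v) $ i = D $ i \<bullet> v" for i
    by (simp add: matrix_vector_mult_def inner_vec_def)
  then have "(norm (D *v v))^2 = (\<Sum>i\<in>UNIV. (D $ i \<bullet> v)^2)"
    unfolding power2_norm_eq_inner inner_vec_def[of "D *v v"] by (simp add: power2_eq_square)
  also have "\<dots> \<le> (\<Sum>i\<in>UNIV. (norm (D $ i) * norm v)^2)"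
  proof (intro sum_mono)
    fix i
    show "(D $ i \<bullet> v)^2 \<le> (norm (D $ i) * norm v)^2"
      using Cauchy_Schwarz_ineq2[of "D $ i" v] by (simp add: abs_le_square_iff[symmetric])
  qed
  also have "\<dots> = (norm D * norm v)^2"
    unfolding power_mult_distrib sum_distrib_right[symmetric] power2_norm_eq_inner
      inner_vec_def[of D] ..
  finally show "(norm (D *v v))^2 \<le> (norm D * norm v)^2" .
qed simp

section \<open>Positive semidefinite matrices\<close>


definition pos_semidef :: "real^'n^'n \<Rightarrow> bool" where
  "pos_semidef M \<longleftrightarrow> transpose M = M \<and> (\<forall>x. 0 \<le> x \<bullet> (M *v x))"

definition outer_prod :: "real^'n \<Rightarrow> real^'m \<Rightarrow> real^'m^'n" where
  "outer_prod a b = (\<chi> i j. a $ i * b $ j)"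

lemma pos_def_imp_pos_semidef: "pos_def M \<Longrightarrow> pos_semidef M"
  unfolding pos_def_def pos_semidef_def
  by (metis inner_zero_left matrix_vector_mult_0_right order_less_imp_le order_refl)

lemma pos_def_invertible: "pos_def X \<Longrightarrow> invertible X"
  unfolding invertible_left_inverse matrix_left_invertible_ker pos_def_def
  by (metis inner_zero_right less_irrefl)

lemma pos_semidef_cauchy_schwarz:
  assumes "pos_semidef M"
  shows "(a \<bullet> (M *v b))^2 \<le> (a \<bullet> (M *v a)) * (b \<bullet> (M *v b))"
proof -
  define p q r where "p = a \<bullet> (M *v a)" and "q = a \<bullet> (M *v b)" and "r = b \<bullet> (M *v b)"
  have qba: "b \<bullet> (M *v a) = q"
    using assms symmetric_inner_commute unfolding pos_semidef_def q_def by blast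
  have quadratic: "0 \<le> p + 2 * s * q + s^2 * r" for s
  proof -
    have "0 \<le> (a + s *\<^sub>R b) \<bullet> (M *v (a + s *\<^sub>R b))"
      using assms unfolding pos_semidef_def by blast
    also have "\<dots> = p + 2 * s * q + s^2 * r"
      using qba by (simp add: p_def q_def r_def matrix_vector_right_distrib inner_add_left
          inner_add_right matrix_vector_mult_scaleR power2_eq_square algebra_simps)
    finally show ?thesis .
  qed
  have "0 \<le> r"
    using assms unfolding pos_semidef_def r_def by blast
  show ?thesis
  proof (cases "r = 0")
    case True
    have "q = 0"
    proof (rule ccontr)
      assume "q \<noteq> 0"
      then show False using quadratic[of "-(p + 1) / (2 * q)"] True by (simp add: field_simps)
    qed
    then show ?thesis using True by (simp add: q_def r_def)
  next
    case False
    with \<open>0 \<le> r\<close> have "0 < r" by simp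
    with quadratic[of "- q / r"] have "q^2 \<le> p * r"
      by (simp add: field_simps power2_eq_square)
    then show ?thesis by (simp add: p_def q_def r_def)
  qed
qed

lemma pos_semidef_zero_diagonal_row:
  assumes "pos_semidef M" and "M $ i $ i = 0"
  shows "M $ i = 0"
proof -
  have "(M $ i $ j)^2 \<le> 0" for j
    using pos_semidef_cauchy_schwarz[OF assms(1), of "axis i 1" "axis j 1"] assms(2) by simp
  then show ?thesis by (simp add: vec_eq_iff)
qed

text \<open>A Cholesky step. If the pivot \<open>M\<^sub>i\<^sub>i\<close> vanishes, so does row \<open>i\<close>, and then \<open>w = 0\<close>
  because \<open>1 / sqrt 0 = 0\<close>.\<close>
lemma pos_semidef_peel_row:
  fixes M :: "real^'n^'n" and i :: 'n
  assumes psd: "pos_semidef M"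
  defines "w \<equiv> (1 / sqrt (M $ i $ i)) *\<^sub>R M $ i"
  shows "pos_semidef (M - outer_prod w w)"
    and "(M - outer_prod w w) $ i = 0"
    and "M $ a = 0 \<Longrightarrow> (M - outer_prod w w) $ a = 0"
proof -
  have sym: "transpose M = M" and nonneg: "\<And>x. 0 \<le> x \<bullet> (M *v x)"
    using psd unfolding pos_semidef_def by auto
  define d where "d = M $ i $ i"
  have "0 \<le> d" using nonneg[of "axis i 1"] by (simp add: d_def)
  have outer_w: "outer_prod w w $ a $ b = M $ i $ a * M $ i $ b / d" for a b
    using \<open>0 \<le> d\<close> by (simp add: outer_prod_def w_def d_def power2_eq_square[symmetric])
  have "pos_semidef (M - outer_prod w w) \<and> (M - outer_prod w w) $ i = 0"
  proof (cases "d = 0")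
    case True
    then have "M $ i = 0" using pos_semidef_zero_diagonal_row[OF psd] by (simp add: d_def)
    then have "outer_prod w w = 0" by (simp add: w_def outer_prod_def vec_eq_iff)
    then show ?thesis using psd \<open>M $ i = 0\<close> by simp
  next
    case False
    with \<open>0 \<le> d\<close> have "0 < d" by simp
    have "transpose (outer_prod w w) = outer_prod w w"
      by (simp add: outer_prod_def transpose_def vec_eq_iff mult.commute)
    then have "transpose (M - outer_prod w w) = M - outer_prod w w"
      using sym by (simp add: transpose_diff)
    moreover have "0 \<le> x \<bullet> ((M - outer_prod w w) *v x)" for x
    proof -
      define c where "c = (M *v x) $ i"
      define z where "z = x - (c / d) *\<^sub>R axis i 1"
      have "x \<bullet> (outer_prod w w *v x) = c^2 / d"
        by (simp add: outer_w c_def matrix_vector_mult_def inner_vec_def power2_eq_square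
            sum_distrib_left sum_distrib_right mult_ac sum_divide_distrib)
      moreover have "axis i 1 \<bullet> (M *v x) = c" and "x \<bullet> (M *v axis i 1) = c"
        using symmetric_inner_commute[OF sym, of x "axis i 1"]
        by (simp_all add: c_def inner_commute[of "axis i 1"] inner_axis)
      then have "z \<bullet> (M *v z) = x \<bullet> (M *v x) - c^2 / d"
        using \<open>0 < d\<close>
        by (simp add: z_def matrix_vector_mult_diff_distrib matrix_vector_mult_scaleR inner_diff_left
            inner_diff_right d_def power2_eq_square field_simps)
      ultimately show ?thesis
        using nonneg[of z] by (simp add: matrix_vector_mult_diff_rdistrib inner_diff_right)
    qed
    moreover have "(M - outer_prod w w) $ i = 0"
      using \<open>0 < d\<close> by (simp add: vec_eq_iff outer_w d_def)
    ultimately show ?thesis unfolding pos_semidef_def by blast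
  qed
  then show "pos_semidef (M - outer_prod w w)" and "(M - outer_prod w w) $ i = 0" by auto
  assume "M $ a = 0"
  moreover have "M $ i $ a = 0" using \<open>M $ a = 0\<close> symmetric_nth[OF sym, of i a] by simp
  ultimately show "(M - outer_prod w w) $ a = 0" by (simp add: vec_eq_iff outer_w)
qed

lemma pos_semidef_sum_outer_prod:
  assumes "finite I" and "pos_semidef M" and "\<And>a. a \<notin> I \<Longrightarrow> M $ a = 0"
  shows "\<exists>W. M = (\<Sum>k\<in>I. outer_prod (W k) (W k))"
  using assms
proof (induction I arbitrary: M rule: finite_induct)
  case empty
  then show ?case by (simp add: vec_eq_iff)
next
  case (insert i I)
  define w where "w = (1 / sqrt (M $ i $ i)) *\<^sub>R M $ i"
  have "pos_semidef (M - outer_prod w w)"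
    using pos_semidef_peel_row(1)[OF insert.prems(1)] by (simp add: w_def)
  moreover have "(M - outer_prod w w) $ a = 0" if "a \<notin> I" for a
  proof (cases "a = i")
    case True
    then show ?thesis using pos_semidef_peel_row(2)[OF insert.prems(1)] by (simp add: w_def)
  next
    case False
    with that have "M $ a = 0" using insert.prems(2) by simp
    then show ?thesis using pos_semidef_peel_row(3)[OF insert.prems(1)] by (simp add: w_def)
  qed
  ultimately obtain W where W: "M - outer_prod w w = (\<Sum>k\<in>I. outer_prod (W k) (W k))"
    using insert.IH by blast
  have "(\<Sum>k\<in>I. outer_prod ((W(i := w)) k) ((W(i := w)) k)) = (\<Sum>k\<in>I. outer_prod (W k) (W k))"
    using insert.hyps by (intro sum.cong) auto
  then have "M = (\<Sum>k\<in>insert i I. outer_prod ((W(i := w)) k) ((W(i := w)) k))"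
    using insert.hyps W by (simp add: algebra_simps)
  then show ?case by blast
qed

lemma pos_semidef_gram:
  fixes M :: "real^'n^'n"
  assumes "pos_semidef M"
  shows "\<exists>R::real^'n^'n. M = transpose R ** R"
proof -
  have "\<exists>W::'n \<Rightarrow> real^'n. M = (\<Sum>k\<in>UNIV. outer_prod (W k) (W k))"
    using pos_semidef_sum_outer_prod[OF _ assms, of UNIV] by simp
  then obtain W :: "'n \<Rightarrow> real^'n" where "M = (\<Sum>k\<in>UNIV. outer_prod (W k) (W k))" ..
  also have "\<dots> = transpose (\<chi> k. W k) ** (\<chi> k. W k)"
    by (simp add: vec_eq_iff outer_prod_def matrix_matrix_mult_def transpose_def sum_component)
  finally show ?thesis by blast
qed

lemma inner_gram: "M \<bullet> (transpose R ** R) = (\<Sum>k\<in>UNIV. R $ k \<bullet> (M *v R $ k))"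
  for M R :: "real^'n^'n"
proof -
  have "M \<bullet> (transpose R ** R) = (R ** M) \<bullet> R"
    by (simp add: inner_matrix_mult_left)
  also have "\<dots> = (\<Sum>k\<in>UNIV. (R $ k v* M) \<bullet> R $ k)"
    unfolding inner_vec_def[of "R ** M"] by (simp add: matrix_matrix_mult_def vector_matrix_mult_def)
  also have "\<dots> = (\<Sum>k\<in>UNIV. R $ k \<bullet> (M *v R $ k))"
    by (simp add: dot_lmul_matrix)
  finally show ?thesis .
qed

lemma quadratic_form_gram: "v \<bullet> ((transpose R ** R) *v v) = (\<Sum>k\<in>UNIV. (R $ k \<bullet> v)^2)"
  for R :: "real^'n^'m"
proof -
  have "v \<bullet> ((transpose R ** R) *v v) = v \<bullet> (transpose R *v (R *v v))"
    by (simp only: matrix_vector_mul_assoc)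
  also have "\<dots> = (R *v v) \<bullet> (R *v v)"
    by (subst inner_matrix_vector_mult) (simp only: transpose_transpose)
  also have "\<dots> = (\<Sum>k\<in>UNIV. (R $ k \<bullet> v)^2)"
    by (simp add: inner_vec_def matrix_vector_mult_def power2_eq_square)
  finally show ?thesis .
qed

lemma inner_pos_semidef_nonneg:
  fixes M X :: "real^'n^'n"
  assumes "pos_semidef M" and "pos_semidef X"
  shows "0 \<le> M \<bullet> X"
proof -
  obtain R :: "real^'n^'n" where "X = transpose R ** R" using pos_semidef_gram[OF assms(2)] by blast
  then show ?thesis
    using assms(1) unfolding pos_semidef_def by (simp add: inner_gram sum_nonneg)
qed

lemma inner_gram_conjugate:
  fixes S R :: "real^'n^'n"
  defines "X \<equiv> transpose R ** R" and "Q \<equiv> R ** S ** transpose R"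
  shows "S \<bullet> X = Q \<bullet> mat 1" and "S \<bullet> (X ** S ** X) = Q \<bullet> Q"
proof -
  have "S \<bullet> X = (R ** S) \<bullet> (mat 1 ** R)"
    by (simp add: X_def inner_matrix_mult_left)
  also have "\<dots> = Q \<bullet> mat 1"
    by (simp only: Q_def inner_matrix_mult_right)
  finally show "S \<bullet> X = Q \<bullet> mat 1" .
  have "X ** S ** X = transpose R ** (Q ** R)"
    by (simp add: X_def Q_def matrix_mul_assoc)
  then have "S \<bullet> (X ** S ** X) = (R ** S) \<bullet> (Q ** R)"
    by (simp only: inner_matrix_mult_left transpose_transpose)
  also have "\<dots> = Q \<bullet> Q"
    by (simp only: Q_def inner_matrix_mult_right)
  finally show "S \<bullet> (X ** S ** X) = Q \<bullet> Q" .
qed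

text \<open>With \<open>X = R\<^sup>T R\<close> and \<open>Q = R S R\<^sup>T\<close> the claim is \<open>0 \<le> \<parallel>Q - I\<parallel>\<^sup>2\<close>.\<close>
lemma inner_le_card_plus_congruence:
  fixes S X :: "real^'n^'n"
  assumes "pos_semidef X"
  shows "2 * (S \<bullet> X) \<le> real CARD('n) + S \<bullet> (X ** S ** X)"
proof -
  obtain R :: "real^'n^'n" where X: "X = transpose R ** R" using pos_semidef_gram[OF assms] by blast
  define Q where "Q = R ** S ** transpose R"
  have "0 \<le> (Q - mat 1) \<bullet> (Q - mat 1)" by simp
  then have "2 * (Q \<bullet> mat 1) \<le> real CARD('n) + Q \<bullet> Q"
    by (simp add: inner_diff_left inner_diff_right inner_mat_1_self inner_commute[of "mat 1" Q])
  then show ?thesis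
    using inner_gram_conjugate[of S R] by (simp add: X Q_def)
qed

lemma congruence_eq_0_imp_eq_0:
  fixes B X :: "real^'n^'n"
  assumes "pos_semidef X" and "invertible X" and "B \<bullet> (X ** B ** X) = 0"
  shows "B = 0"
proof -
  obtain R :: "real^'n^'n" where X: "X = transpose R ** R" using pos_semidef_gram[OF assms(1)] by blast
  then have "R ** B ** transpose R = 0"
    using assms(3) inner_gram_conjugate(2)[of B R] by simp
  moreover have "X ** B ** X = transpose R ** (R ** B ** transpose R) ** R"
    by (simp add: X matrix_mul_assoc)
  ultimately have "X ** B ** X = 0"
    by (simp add: matrix_matrix_mult_def vec_eq_iff)
  have "B = (matrix_inv X ** X) ** B ** (X ** matrix_inv X)"
    using assms(2) by (simp add: matrix_inv_left matrix_inv_right)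
  also have "\<dots> = matrix_inv X ** (X ** B ** X) ** matrix_inv X"
    by (simp add: matrix_mul_assoc)
  also have "\<dots> = 0"
    using \<open>X ** B ** X = 0\<close> by (simp add: matrix_matrix_mult_def vec_eq_iff)
  finally show "B = 0" .
qed

lemma quadratic_form_le_inverse_pairing:
  fixes X Y :: "real^'n^'n"
  assumes "pos_semidef Y" and "pos_def X"
  shows "v \<bullet> (Y *v v) \<le> (matrix_inv X \<bullet> Y) * (v \<bullet> (X *v v))"
proof -
  obtain R :: "real^'n^'n" where Y: "Y = transpose R ** R"
    using pos_semidef_gram[OF assms(1)] by blast
  have psd: "pos_semidef X" using assms(2) by (rule pos_def_imp_pos_semidef)
  then have sym: "transpose X = X" unfolding pos_semidef_def by blast
  have "(R $ k \<bullet> v)^2 \<le> (R $ k \<bullet> (matrix_inv X *v R $ k)) * (v \<bullet> (X *v v))" for k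
  proof -
    define u where "u = matrix_inv X *v R $ k"
    have Xu: "X *v u = R $ k"
      using matrix_inv_right[OF pos_def_invertible[OF assms(2)]]
      by (simp add: u_def matrix_vector_mul_assoc)
    have "(u \<bullet> (X *v v))^2 \<le> (u \<bullet> (X *v u)) * (v \<bullet> (X *v v))"
      by (rule pos_semidef_cauchy_schwarz[OF psd])
    moreover have "u \<bullet> (X *v v) = R $ k \<bullet> v"
      using symmetric_inner_commute[OF sym, of u v] Xu by (simp add: inner_commute)
    ultimately show ?thesis using Xu by (simp add: u_def inner_commute)
  qed
  then have "(\<Sum>k\<in>UNIV. (R $ k \<bullet> v)^2)
      \<le> (\<Sum>k\<in>UNIV. (R $ k \<bullet> (matrix_inv X *v R $ k)) * (v \<bullet> (X *v v)))"
    by (rule sum_mono)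
  then show ?thesis by (simp add: Y quadratic_form_gram inner_gram sum_distrib_right)
qed

lemma pos_def_uniform:
  fixes M :: "real^'n^'n"
  assumes "pos_def M"
  shows "\<exists>\<kappa>>0. \<forall>v. \<kappa> * (norm v)^2 \<le> v \<bullet> (M *v v)"
proof -
  let ?q = "\<lambda>v::real^'n. v \<bullet> (M *v v)"
  obtain i :: 'n where True by blast
  then have "axis i 1 \<in> sphere (0::real^'n) 1" by (simp add: norm_axis_1)
  then have "sphere (0::real^'n) 1 \<noteq> {}" by blast
  moreover have "continuous_on (sphere 0 1) ?q" by (intro continuous_intros)
  ultimately obtain x where x: "x \<in> sphere 0 1" and min: "\<forall>y\<in>sphere 0 1. ?q x \<le> ?q y"
    using continuous_attains_inf[OF compact_sphere] by blast
  have "x \<noteq> 0" using x by auto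
  then have "0 < ?q x" using assms unfolding pos_def_def by blast
  moreover have "?q x * (norm v)^2 \<le> ?q v" for v
  proof (cases "v = 0")
    case False
    then have "(1 / norm v) *\<^sub>R v \<in> sphere 0 1" by simp
    then have "?q x \<le> ?q ((1 / norm v) *\<^sub>R v)" using min by blast
    also have "\<dots> = ?q v / (norm v)^2"
      by (simp add: matrix_vector_mult_scaleR power2_eq_square)
    finally show ?thesis using False by (simp add: field_simps)
  qed simp
  ultimately show ?thesis by blast
qed

lemma pos_def_near:
  fixes M N :: "real^'n^'n"
  assumes bound: "\<forall>v. \<kappa> * (norm v)^2 \<le> v \<bullet> (M *v v)"
    and "transpose N = N" and "norm (N - M) < \<kappa>"
  shows "pos_def N"
  unfolding pos_def_def
proof (intro conjI allI impI)
  fix v :: "real^'n" assume "v \<noteq> 0"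
  have "\<bar>v \<bullet> ((N - M) *v v)\<bar> \<le> norm v * norm ((N - M) *v v)"
    by (rule Cauchy_Schwarz_ineq2)
  also have "\<dots> \<le> norm v * (norm (N - M) * norm v)"
    by (intro mult_left_mono norm_matrix_vector_mult_le norm_ge_zero)
  also have "\<dots> < \<kappa> * (norm v)^2"
    using \<open>v \<noteq> 0\<close> \<open>norm (N - M) < \<kappa>\<close> by (simp add: power2_eq_square)
  finally show "0 < v \<bullet> (N *v v)"
    using bound[rule_format, of v]
    by (simp add: matrix_vector_mult_diff_rdistrib inner_diff_right)
qed fact

section \<open>Paths of matrices\<close>

lemma tendsto_det:
  fixes X :: "'a \<Rightarrow> real^'n^'n"
  assumes "(X \<longlongrightarrow> L) F"
  shows "((\<lambda>s. det (X s)) \<longlongrightarrow> det L) F"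
  unfolding det_def by (intro tendsto_intros assms)

lemma matrix_inv_mult_cramer:
  fixes M :: "real^'n^'n"
  assumes "invertible M"
  shows "matrix_inv M *v w = (\<chi> k. det (\<chi> i j. if j = k then w $ i else M $ i $ j) / det M)"
proof -
  have "M *v (matrix_inv M *v w) = w"
    using matrix_inv_right[OF assms] by (simp add: matrix_vector_mul_assoc)
  then show ?thesis
    using cramer[OF invertible_det_nz[THEN iffD1, OF assms]] by blast
qed

lemma tendsto_matrix_inv_mult:
  fixes X :: "'a \<Rightarrow> real^'n^'n"
  assumes X: "(X \<longlongrightarrow> L) F" and "invertible L"
  shows "((\<lambda>s. matrix_inv (X s) *v w) \<longlongrightarrow> matrix_inv L *v w) F"
proof -
  define N where "N M = (\<lambda>k. \<chi> i j. if j = k then w $ i else M $ i $ j)" for M :: "real^'n^'n" and k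
  have "det L \<noteq> 0" using assms(2) invertible_det_nz by blast
  have "((\<lambda>s. det (X s)) \<longlongrightarrow> det L) F" using X by (rule tendsto_det)
  then have "eventually (\<lambda>s. det (X s) \<noteq> 0) F"
    using \<open>det L \<noteq> 0\<close> by (rule tendsto_imp_eventually_ne)
  then have "eventually (\<lambda>s. (\<chi> k. det (N (X s) k) / det (X s)) = matrix_inv (X s) *v w) F"
    by eventually_elim (simp add: N_def matrix_inv_mult_cramer invertible_det_nz)
  moreover have "((\<lambda>s. N (X s) k) \<longlongrightarrow> N L k) F" for k
  proof -
    have "((\<lambda>s. if j = k then w $ i else X s $ i $ j) \<longlongrightarrow> (if j = k then w $ i else L $ i $ j)) F"
      for i j by (cases "j = k") (simp_all add: tendsto_vec_nth X)
    then show ?thesis unfolding N_def by (intro tendsto_intros)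
  qed
  then have "((\<lambda>s. \<chi> k. det (N (X s) k) / det (X s)) \<longlongrightarrow> (\<chi> k. det (N L k) / det L)) F"
    using \<open>det L \<noteq> 0\<close> by (intro tendsto_intros tendsto_det X)
  ultimately show ?thesis
    using assms(2) by (simp add: N_def matrix_inv_mult_cramer Lim_transform_eventually)
qed

lemma has_real_derivative_matrix_nth:
  fixes X :: "real \<Rightarrow> real^'n^'m"
  assumes "(X has_vector_derivative X') F"
  shows "((\<lambda>s. X s $ i $ j) has_real_derivative X' $ i $ j) F"
proof -
  have "bounded_linear (\<lambda>M::real^'n^'m. M $ i $ j)"
    by (intro bounded_linear_compose[OF bounded_linear_vec_nth] bounded_linear_vec_nth)
  from bounded_linear.has_vector_derivative[OF this assms] show ?thesis
    by (simp add: has_real_derivative_iff_has_vector_derivative)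
qed

text \<open>With \<open>u(s) = X(s)\<^sup>-\<^sup>1 w\<close> and \<open>X(t)\<close> symmetric, the difference quotient is exactly
  \<open>-u(t)\<^sup>T ((X(s) - X(t)) / (s - t)) u(s)\<close>, and \<open>u\<close> is continuous by Cramer's rule.\<close>
lemma has_real_derivative_inverse_quadratic_form:
  fixes X :: "real \<Rightarrow> real^'n^'n"
  assumes der: "(X has_vector_derivative X') (at t within D)"
    and inv: "\<forall>s\<in>D. invertible (X s)" and sym: "transpose (X t) = X t" and "t \<in> D"
  shows "((\<lambda>s. w \<bullet> (matrix_inv (X s) *v w)) has_real_derivative
           - ((matrix_inv (X t) *v w) \<bullet> (X' *v (matrix_inv (X t) *v w)))) (at t within D)"
proof -
  define u where "u s = matrix_inv (X s) *v w" for s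
  define q where "q s = (\<Sum>i\<in>UNIV. \<Sum>j\<in>UNIV. u t $ i * ((X s $ i $ j - X t $ i $ j) / (s - t)) * u s $ j)"
    for s
  have Xu: "X s *v u s = w" if "s \<in> D" for s
    using matrix_inv_right[of "X s"] inv that by (simp add: u_def matrix_vector_mul_assoc)
  have "(X \<longlongrightarrow> X t) (at t within D)"
    using has_vector_derivative_continuous[OF der] by (simp add: continuous_within)
  then have "(u \<longlongrightarrow> u t) (at t within D)"
    unfolding u_def using inv \<open>t \<in> D\<close> by (intro tendsto_matrix_inv_mult) auto
  moreover have "((\<lambda>s. (X s $ i $ j - X t $ i $ j) / (s - t)) \<longlongrightarrow> X' $ i $ j) (at t within D)" for i j
    using has_real_derivative_matrix_nth[OF der] by (simp add: has_field_derivative_iff)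
  ultimately have "(q \<longlongrightarrow> u t \<bullet> (X' *v u t)) (at t within D)"
    unfolding q_def inner_matrix_vector_mult_expand by (intro tendsto_intros)
  moreover have "(w \<bullet> u s - w \<bullet> u t) / (s - t) = - q s" if "s \<in> D" for s
  proof -
    have "w \<bullet> u s - w \<bullet> u t = u t \<bullet> (X t *v u s) - u t \<bullet> (X s *v u s)"
      using Xu[OF that] Xu[OF \<open>t \<in> D\<close>] symmetric_inner_commute[OF sym, of "u t" "u s"]
      by (simp add: inner_commute)
    also have "\<dots> = - (u t \<bullet> ((X s - X t) *v u s))"
      by (simp add: matrix_vector_mult_diff_rdistrib inner_diff_right)
    finally show ?thesis
      by (simp add: q_def inner_matrix_vector_mult_expand sum_divide_distrib mult_ac
          flip: minus_divide_left)
  qed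
  ultimately have "((\<lambda>s. (w \<bullet> u s - w \<bullet> u t) / (s - t)) \<longlongrightarrow> - (u t \<bullet> (X' *v u t))) (at t within D)"
    by (intro Lim_transform_eventually[OF tendsto_minus]) (auto simp: eventually_at_filter)
  then show ?thesis
    by (simp add: has_field_derivative_iff u_def)
qed

lemma nonpos_derivative_imp_le_initial:
  fixes f :: "real \<Rightarrow> real"
  assumes der: "\<forall>s\<in>{a..<b}. \<exists>d. (f has_real_derivative d) (at s within {a..<b}) \<and> d \<le> 0"
    and "a \<le> t" "t < b"
  shows "f t \<le> f a"
proof (rule DERIV_nonpos_imp_decreasing_open[OF \<open>a \<le> t\<close>])
  fix s assume "a < s" "s < t"
  then obtain d where d: "(f has_real_derivative d) (at s within {a..<b})" "d \<le> 0"
    using der \<open>t < b\<close> by fastforce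
  have "(f has_real_derivative d) (at s within {a<..<b})"
    by (rule has_field_derivative_subset[OF d(1)]) auto
  moreover have "at s within {a<..<b} = at s"
    using \<open>a < s\<close> \<open>s < t\<close> \<open>t < b\<close> by (intro at_within_open) auto
  ultimately show "\<exists>y. (f has_real_derivative y) (at s) \<and> y \<le> 0" using d(2) by auto
next
  show "continuous_on {a..t} f"
    unfolding continuous_on_eq_continuous_within
  proof
    fix s assume "s \<in> {a..t}"
    then obtain d where "(f has_real_derivative d) (at s within {a..<b})"
      using der \<open>t < b\<close> by fastforce
    then have "continuous (at s within {a..<b}) f" by (rule DERIV_continuous)
    then show "continuous (at s within {a..t}) f"
      by (rule continuous_within_subset) (use \<open>t < b\<close> in auto)
  qed
qed

lemma quadratic_form_lower_bound_limit:
  fixes X :: "real \<Rightarrow> real^'n^'n"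
  assumes "continuous (at T within {0..}) X" and "0 < T"
    and "\<forall>s\<in>{0..<T}. \<kappa> * (norm v)^2 \<le> v \<bullet> (X s *v v)"
  shows "\<kappa> * (norm v)^2 \<le> v \<bullet> (X T *v v)"
proof (rule tendsto_lowerbound)
  have "(X \<longlongrightarrow> X T) (at T within {0..T})"
    using assms(1) by (auto simp: continuous_within intro: tendsto_within_subset)
  then have "(X \<longlongrightarrow> X T) (at_left T)"
    by (simp add: at_within_Icc_at_left[OF \<open>0 < T\<close>])
  then show "((\<lambda>s. v \<bullet> (X s *v v)) \<longlongrightarrow> v \<bullet> (X T *v v)) (at_left T)"
    unfolding inner_matrix_vector_mult_expand by (intro tendsto_intros)
  show "eventually (\<lambda>s. \<kappa> * (norm v)^2 \<le> v \<bullet> (X s *v v)) (at_left T)"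
    using eventually_at_left_real[OF \<open>0 < T\<close>] by eventually_elim (use assms(3) in auto)
qed simp

text \<open>At the first exit time \<open>T\<close> from the cone the uniform bound survives in the limit, so
  positive definiteness persists a little beyond \<open>T\<close>.\<close>
lemma pos_def_continuation:
  fixes X :: "real \<Rightarrow> real^'n^'n"
  assumes cont: "continuous_on {0..} X"
    and sym: "\<And>t. 0 \<le> t \<Longrightarrow> transpose (X t) = X t"
    and X0: "pos_def (X 0)"
    and apriori: "\<And>T. 0 < T \<Longrightarrow> \<forall>s\<in>{0..<T}. pos_def (X s) \<Longrightarrow>
                    \<exists>\<kappa>>0. \<forall>s\<in>{0..<T}. \<forall>v. \<kappa> * (norm v)^2 \<le> v \<bullet> (X s *v v)"
    and "0 \<le> t"
  shows "pos_def (X t)"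
proof (rule ccontr)
  assume "\<not> pos_def (X t)"
  define Bad where "Bad = {t. 0 \<le> t \<and> \<not> pos_def (X t)}"
  define T where "T = Inf Bad"
  have "Bad \<noteq> {}" using \<open>0 \<le> t\<close> \<open>\<not> pos_def (X t)\<close> by (auto simp: Bad_def)
  have "bdd_below Bad" by (rule bdd_belowI[of _ 0]) (auto simp: Bad_def)
  have "0 \<le> T" unfolding T_def by (rule cInf_greatest[OF \<open>Bad \<noteq> {}\<close>]) (auto simp: Bad_def)
  have before: "pos_def (X s)" if "0 \<le> s" "s < T" for s
  proof (rule ccontr)
    assume "\<not> pos_def (X s)"
    with that have "T \<le> s" unfolding T_def by (intro cInf_lower \<open>bdd_below Bad\<close>) (auto simp: Bad_def)
    with \<open>s < T\<close> show False by simp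
  qed
  have XT: "continuous (at T within {0..}) X"
    using cont \<open>0 \<le> T\<close> by (simp add: continuous_on_eq_continuous_within)
  obtain \<kappa> where "0 < \<kappa>" and bound: "\<forall>v. \<kappa> * (norm v)^2 \<le> v \<bullet> (X T *v v)"
  proof (cases "T = 0")
    case True
    then show ?thesis using pos_def_uniform[OF X0] that by auto
  next
    case False
    with \<open>0 \<le> T\<close> have "0 < T" by simp
    moreover have "\<forall>s\<in>{0..<T}. pos_def (X s)" using before by simp
    ultimately obtain \<kappa> where "0 < \<kappa>"
      and \<kappa>: "\<forall>s\<in>{0..<T}. \<forall>v. \<kappa> * (norm v)^2 \<le> v \<bullet> (X s *v v)"
      using apriori by blast
    then have "\<forall>v. \<kappa> * (norm v)^2 \<le> v \<bullet> (X T *v v)"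
      using quadratic_form_lower_bound_limit[OF XT \<open>0 < T\<close>] by blast
    then show ?thesis using that \<open>0 < \<kappa>\<close> by blast
  qed
  obtain d where "0 < d" and near: "\<forall>s\<in>{0..}. dist s T < d \<longrightarrow> dist (X s) (X T) < \<kappa>"
    using XT \<open>0 < \<kappa>\<close> unfolding continuous_within_eps_delta by blast
  have "pos_def (X s)" if "0 \<le> s" "s < T + d" for s
  proof (cases "s < T")
    case False
    with that have "dist s T < d" by (simp add: dist_real_def)
    with near \<open>0 \<le> s\<close> have "norm (X s - X T) < \<kappa>" by (simp add: dist_norm)
    then show ?thesis using pos_def_near[OF bound sym[OF \<open>0 \<le> s\<close>]] by blast
  qed (use before that in auto)
  then have "T + d \<le> T"
    unfolding T_def by (intro cInf_greatest[OF \<open>Bad \<noteq> {}\<close>]) (force simp: Bad_def not_less)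
  with \<open>0 < d\<close> show False by simp
qed

section \<open>The dual slack of the constraints\<close>

locale sdp_constraints =
  fixes C :: "real^'n^'n" and A :: "'m::finite \<Rightarrow> real^'n^'n"
  assumes C_sym: "transpose C = C"
    and A_sym: "\<And>l. transpose (A l) = A l"
    and A_inj: "inj A" and A_indep: "independent (range A)"
begin

definition dual_gram :: "real^'n^'n \<Rightarrow> real^'m^'m" where
  "dual_gram X = constr_mat A ** kron X X ** transpose (constr_mat A)"

definition multiplier :: "real^'n^'n \<Rightarrow> real^'m" where
  "multiplier X = matrix_inv (dual_gram X) *v (constr_mat A *v (kron X X *v vecm C))"

definition dual_slack :: "real^'n^'n \<Rightarrow> real^'n^'n" where
  "dual_slack X = C - (\<Sum>l\<in>UNIV. multiplier X $ l *\<^sub>R A l)"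

lemma transpose_constr_mat_multiplier:
  "transpose (constr_mat A) *v multiplier X = vecm (C - dual_slack X)"
  unfolding dual_slack_def transpose_constr_mat_mult by simp

lemma dual_slack_symmetric: "transpose (dual_slack X) = dual_slack X"
proof -
  have "A l $ j $ i = A l $ i $ j" for l i j
    using symmetric_nth[OF A_sym] .
  then have "transpose (\<Sum>l\<in>UNIV. multiplier X $ l *\<^sub>R A l) = (\<Sum>l\<in>UNIV. multiplier X $ l *\<^sub>R A l)"
    by (simp add: transpose_def vec_eq_iff sum_component)
  then show ?thesis by (simp add: dual_slack_def transpose_diff C_sym)
qed

lemma dual_gram_mult_multiplier:
  "dual_gram X *v multiplier X' = constr_mat A *v vecm (X ** (C - dual_slack X') ** transpose X)"
  by (simp add: dual_gram_def matrix_vector_mul_assoc[symmetric] transpose_constr_mat_multiplier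
      kron_mult_vecm del: transpose_matrix_vector)

lemma second_ansatz_field:
  "- ((mat 1 - kron X X ** transpose (constr_mat A)
         ** matrix_inv (constr_mat A ** kron X X ** transpose (constr_mat A)) ** constr_mat A)
      ** kron X X) *v vecm C
   = vecm (- (X ** dual_slack X ** transpose X))"
proof -
  let ?G = "kron X X"
  let ?P = "?G ** transpose (constr_mat A) ** matrix_inv (dual_gram X) ** constr_mat A"
  have GC: "?G *v vecm C = vecm (X ** C ** transpose X)"
    by (rule kron_mult_vecm)
  have "?P *v vecm (X ** C ** transpose X) = ?G *v vecm (C - dual_slack X)"
    unfolding GC[symmetric]
    by (simp add: matrix_vector_mul_assoc[symmetric] multiplier_def[symmetric]
        transpose_constr_mat_multiplier del: transpose_matrix_vector)
  also have "\<dots> = vecm (X ** (C - dual_slack X) ** transpose X)"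
    by (rule kron_mult_vecm)
  finally have PGC: "?P *v vecm (X ** C ** transpose X) = vecm (X ** (C - dual_slack X) ** transpose X)" .
  have "- ((mat 1 - ?P) ** ?G) *v vecm C = - (?G *v vecm C - ?P *v (?G *v vecm C))"
    by (simp add: matrix_vector_mul_assoc[symmetric] matrix_vector_mult_diff_rdistrib
        matrix_vector_mult_uminus)
  also have "\<dots> = vecm (- (X ** dual_slack X ** transpose X))"
    by (simp only: GC PGC matrix_diff_ldistrib matrix_diff_rdistrib vecm_diff vecm_uminus) simp
  finally show ?thesis by (simp only: dual_gram_def)
qed

lemma dual_gram_invertible:
  assumes "pos_def X"
  shows "invertible (dual_gram X)"
  unfolding invertible_left_inverse matrix_left_invertible_ker
proof (intro allI impI)
  fix y assume "dual_gram X *v y = 0"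
  define B where "B = (\<Sum>l\<in>UNIV. y $ l *\<^sub>R A l)"
  have psd: "pos_semidef X" using assms by (rule pos_def_imp_pos_semidef)
  then have sym: "transpose X = X" unfolding pos_semidef_def by blast
  have "0 = y \<bullet> (dual_gram X *v y)" using \<open>dual_gram X *v y = 0\<close> by simp
  also have "\<dots> = y \<bullet> (constr_mat A *v vecm (X ** B ** X))"
    by (simp add: dual_gram_def matrix_vector_mul_assoc[symmetric] transpose_constr_mat_mult
        kron_mult_vecm sym B_def del: transpose_matrix_vector)
  also have "\<dots> = B \<bullet> (X ** B ** X)"
    by (simp add: inner_constr_mat_mult B_def)
  finally have "B = 0"
    using congruence_eq_0_imp_eq_0[OF psd pos_def_invertible[OF assms]] by simp
  then show "y = 0"
    using independent_combination_eq_0[OF A_inj A_indep] by (simp add: B_def)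
qed

lemma constraints_slack_congruence:
  assumes "pos_def X"
  shows "constr_mat A *v vecm (X ** dual_slack X ** X) = 0"
proof -
  have sym: "transpose X = X" using assms unfolding pos_def_def by blast
  have "constr_mat A *v vecm (X ** (C - dual_slack X) ** X) = dual_gram X *v multiplier X"
    by (simp add: dual_gram_mult_multiplier sym)
  also have "\<dots> = constr_mat A *v vecm (X ** C ** X)"
    using matrix_inv_right[OF dual_gram_invertible[OF assms]]
    by (simp add: multiplier_def matrix_vector_mul_assoc matrix_mul_assoc kron_mult_vecm sym)
  finally show ?thesis
    by (simp add: matrix_diff_ldistrib matrix_diff_rdistrib vecm_diff matrix_vector_mult_diff_distrib)
qed

lemma inner_C_slack_congruence:
  assumes "pos_def X"
  shows "C \<bullet> (X ** dual_slack X ** X) = dual_slack X \<bullet> (X ** dual_slack X ** X)"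
proof -
  have "(C - dual_slack X) \<bullet> (X ** dual_slack X ** X)
      = multiplier X \<bullet> (constr_mat A *v vecm (X ** dual_slack X ** X))"
    by (simp add: inner_constr_mat_mult dual_slack_def)
  then have "(C - dual_slack X) \<bullet> (X ** dual_slack X ** X) = 0"
    by (simp add: constraints_slack_congruence[OF assms])
  then show ?thesis by (simp add: inner_diff_left)
qed

lemma inner_dual_slack_feasible:
  assumes "constr_mat A *v vecm Y = constr_mat A *v vecm X"
  shows "dual_slack X \<bullet> Y = C \<bullet> Y - C \<bullet> X + dual_slack X \<bullet> X"
proof -
  have "(C - dual_slack X) \<bullet> (Y - X) = multiplier X \<bullet> (constr_mat A *v vecm (Y - X))"
    by (simp add: inner_constr_mat_mult dual_slack_def)
  then have "(C - dual_slack X) \<bullet> (Y - X) = 0"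
    using assms by (simp add: vecm_diff matrix_vector_mult_diff_distrib)
  then show ?thesis by (simp add: inner_diff_left inner_diff_right)
qed

lemma dual_slack_growth_bound:
  assumes "pos_semidef C" and "pos_def X"
    and "constr_mat A *v vecm Y = constr_mat A *v vecm X"
  shows "dual_slack X \<bullet> Y - C \<bullet> (X ** dual_slack X ** X) / 2 \<le> C \<bullet> Y + real CARD('n) / 2"
proof -
  have psd: "pos_semidef X" using assms(2) by (rule pos_def_imp_pos_semidef)
  have "0 \<le> C \<bullet> X" using inner_pos_semidef_nonneg[OF assms(1) psd] .
  moreover have "2 * (dual_slack X \<bullet> X)
      \<le> real CARD('n) + dual_slack X \<bullet> (X ** dual_slack X ** X)"
    using inner_le_card_plus_congruence[OF psd] .
  ultimately show ?thesis
    using inner_dual_slack_feasible[OF assms(3)] inner_C_slack_congruence[OF assms(2)] by linarith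
qed

end

section \<open>The second-ansatz flow\<close>

locale second_ansatz_flow = sdp_constraints C A
  for C :: "real^'n^'n" and A :: "'m::finite \<Rightarrow> real^'n^'n" +
  fixes X Xd :: "real \<Rightarrow> real^'n^'n"
  assumes deriv: "\<And>t. 0 \<le> t \<Longrightarrow> (X has_vector_derivative Xd t) (at t within {0..})"
    and dyn: "\<And>t. 0 \<le> t \<Longrightarrow> vecm (Xd t) =
       - ((mat 1 - kron (X t) (X t) ** transpose (constr_mat A)
              ** matrix_inv (constr_mat A ** kron (X t) (X t) ** transpose (constr_mat A))
              ** constr_mat A)
          ** kron (X t) (X t)) *v vecm C"
    and X0_pd: "pos_def (X 0)"
begin

lemma flow_derivative_within:
  "0 \<le> s \<Longrightarrow> S \<subseteq> {0..} \<Longrightarrow> (X has_vector_derivative Xd s) (at s within S)"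
  using deriv by (rule has_vector_derivative_within_subset)

lemma flow_eq_transpose: "0 \<le> t \<Longrightarrow> Xd t = - (X t ** dual_slack (X t) ** transpose (X t))"
  using dyn second_ansatz_field by (simp add: vecm_inject)

lemma flow_symmetric:
  assumes "0 \<le> t"
  shows "transpose (X t) = X t"
proof -
  have zero_derivative:
    "((\<lambda>s. X s - transpose (X s)) has_vector_derivative 0) (at s within {0..})" if "s \<in> {0..}" for s
  proof -
    have "transpose (Xd s) = Xd s"
      using flow_eq_transpose[of s] that
      by (simp add: transpose_uminus matrix_transpose_mul dual_slack_symmetric matrix_mul_assoc)
    moreover have "((\<lambda>s. X s - transpose (X s)) has_vector_derivative Xd s - transpose (Xd s))
        (at s within {0..})"
      using that by (intro has_vector_derivative_diff deriv
          bounded_linear.has_vector_derivative[OF bounded_linear_transpose]) auto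
    ultimately show ?thesis by simp
  qed
  obtain c where c: "\<And>s. s \<in> {0..} \<Longrightarrow> X s - transpose (X s) = c"
    using has_vector_derivative_zero_constant[OF convex_real_interval(1) zero_derivative] by blast
  have "transpose (X 0) = X 0" using X0_pd unfolding pos_def_def by blast
  with c[of 0] c[of t] assms show ?thesis by simp
qed

lemma flow_eq: "0 \<le> t \<Longrightarrow> Xd t = - (X t ** dual_slack (X t) ** X t)"
  using flow_eq_transpose flow_symmetric by simp

lemma flow_constraints:
  assumes "0 \<le> t" and pd: "\<forall>s\<in>{0..t}. pos_def (X s)"
  shows "constr_mat A *v vecm (X t) = constr_mat A *v vecm (X 0)"
proof -
  have bl: "bounded_linear (\<lambda>M. constr_mat A *v vecm M)"
    by (intro linear_conv_bounded_linear[THEN iffD1] linear_compose[OF linear_vecm, unfolded o_def]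
        matrix_vector_mul_linear)
  have zero_derivative:
    "((\<lambda>s. constr_mat A *v vecm (X s)) has_vector_derivative 0) (at s within {0..t})"
    if "s \<in> {0..t}" for s
  proof -
    have "constr_mat A *v vecm (Xd s) = 0"
      using that pd constraints_slack_congruence[of "X s"] flow_eq[of s]
      by (simp add: vecm_uminus linear_neg[OF matrix_vector_mul_linear])
    then show ?thesis
      using bounded_linear.has_vector_derivative[OF bl flow_derivative_within[of s "{0..t}"]] that
      by auto
  qed
  obtain c where "\<And>s. s \<in> {0..t} \<Longrightarrow> constr_mat A *v vecm (X s) = c"
    using has_vector_derivative_zero_constant[OF convex_real_interval(5) zero_derivative] by blast
  from this[of 0] this[of t] \<open>0 \<le> t\<close> show ?thesis by simp
qed

definition inverse_pairing :: "real \<Rightarrow> real" where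
  "inverse_pairing s = matrix_inv (X s) \<bullet> X 0"

lemma inverse_pairing_derivative:
  assumes pd: "\<forall>s\<in>{0..<T}. pos_def (X s)" and s: "s \<in> {0..<T}"
  shows "(inverse_pairing has_real_derivative dual_slack (X s) \<bullet> X 0) (at s within {0..<T})"
proof -
  obtain R :: "real^'n^'n" where R: "X 0 = transpose R ** R"
    using pos_semidef_gram[OF pos_def_imp_pos_semidef[OF X0_pd]] by blast
  have inv: "\<forall>s\<in>{0..<T}. invertible (X s)" using pd pos_def_invertible by blast
  have sym: "transpose (X s) = X s" using s flow_symmetric by simp
  have der: "(X has_vector_derivative Xd s) (at s within {0..<T})"
    using s by (intro flow_derivative_within) auto
  have "((\<lambda>s. R $ k \<bullet> (matrix_inv (X s) *v R $ k)) has_real_derivative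
      R $ k \<bullet> (dual_slack (X s) *v R $ k)) (at s within {0..<T})" for k
  proof -
    define u where "u = matrix_inv (X s) *v R $ k"
    have Xu: "X s *v u = R $ k"
      using matrix_inv_right[of "X s"] inv s by (simp add: u_def matrix_vector_mul_assoc)
    have "- (u \<bullet> (Xd s *v u)) = (X s *v u) \<bullet> (dual_slack (X s) *v (X s *v u))"
      using s symmetric_inner_commute[OF sym, of u]
      by (simp add: flow_eq matrix_vector_mult_uminus matrix_vector_mul_assoc[symmetric]
          inner_commute)
    then show ?thesis
      using has_real_derivative_inverse_quadratic_form[OF der inv sym s, of "R $ k"]
      unfolding u_def[symmetric] by (simp add: Xu)
  qed
  then have "((\<lambda>s. \<Sum>k\<in>UNIV. R $ k \<bullet> (matrix_inv (X s) *v R $ k)) has_real_derivative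
      (\<Sum>k\<in>UNIV. R $ k \<bullet> (dual_slack (X s) *v R $ k))) (at s within {0..<T})"
    by (rule DERIV_sum)
  moreover have "inverse_pairing = (\<lambda>s. \<Sum>k\<in>UNIV. R $ k \<bullet> (matrix_inv (X s) *v R $ k))"
    by (simp add: fun_eq_iff inverse_pairing_def R inner_gram)
  ultimately show ?thesis by (simp add: R inner_gram)
qed

definition lyapunov :: "real \<Rightarrow> real" where
  "lyapunov s = inverse_pairing s + C \<bullet> X s / 2 - (C \<bullet> X 0 + real CARD('n) / 2) * s"

lemma lyapunov_nonincreasing:
  assumes C_psd: "pos_semidef C" and pd: "\<forall>s\<in>{0..<T}. pos_def (X s)"
  shows "\<forall>s\<in>{0..<T}. \<exists>d. (lyapunov has_real_derivative d) (at s within {0..<T}) \<and> d \<le> 0"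
proof
  fix s assume s: "s \<in> {0..<T}"
  define K where "K = C \<bullet> X 0 + real CARD('n) / 2"
  have "(X has_vector_derivative Xd s) (at s within {0..<T})"
    using s by (intro flow_derivative_within) auto
  from bounded_linear.has_vector_derivative[OF bounded_linear_inner_right this]
  have "((\<lambda>s. C \<bullet> X s) has_real_derivative C \<bullet> Xd s) (at s within {0..<T})"
    by (simp add: has_real_derivative_iff_has_vector_derivative)
  then have derivative: "(lyapunov has_real_derivative
      dual_slack (X s) \<bullet> X 0 + C \<bullet> Xd s / 2 - K * 1) (at s within {0..<T})"
    unfolding lyapunov_def[abs_def] K_def[symmetric]
    by (intro DERIV_diff DERIV_add inverse_pairing_derivative[OF pd s] DERIV_cdivide
        DERIV_cmult DERIV_ident)
  have "constr_mat A *v vecm (X 0) = constr_mat A *v vecm (X s)"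
    using flow_constraints[of s] pd s by simp
  then have "dual_slack (X s) \<bullet> X 0 - C \<bullet> (X s ** dual_slack (X s) ** X s) / 2
      \<le> C \<bullet> X 0 + real CARD('n) / 2"
    using pd s by (intro dual_slack_growth_bound[OF C_psd]) auto
  moreover have "C \<bullet> Xd s = - (C \<bullet> (X s ** dual_slack (X s) ** X s))"
    using s by (simp add: flow_eq)
  ultimately have "dual_slack (X s) \<bullet> X 0 + C \<bullet> Xd s / 2 - K * 1 \<le> 0"
    unfolding K_def mult_1_right by linarith
  with derivative show "\<exists>d. (lyapunov has_real_derivative d) (at s within {0..<T}) \<and> d \<le> 0"
    by blast
qed

lemma inverse_pairing_bounded:
  assumes C_psd: "pos_semidef C" and pd: "\<forall>s\<in>{0..<T}. pos_def (X s)" and s: "s \<in> {0..<T}"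
  shows "inverse_pairing s \<le> inverse_pairing 0 + C \<bullet> X 0 / 2 + (C \<bullet> X 0 + real CARD('n) / 2) * T"
proof -
  define K where "K = C \<bullet> X 0 + real CARD('n) / 2"
  have "lyapunov s \<le> lyapunov 0"
    by (rule nonpos_derivative_imp_le_initial[OF lyapunov_nonincreasing[OF C_psd pd]]) (use s in auto)
  moreover have "0 \<le> C \<bullet> X s"
    using inner_pos_semidef_nonneg[OF C_psd pos_def_imp_pos_semidef] pd s by blast
  moreover have "0 \<le> K"
    using inner_pos_semidef_nonneg[OF C_psd pos_def_imp_pos_semidef[OF X0_pd]] by (simp add: K_def)
  then have "K * s \<le> K * T" using s by (intro mult_left_mono) auto
  ultimately show ?thesis
    unfolding lyapunov_def K_def[symmetric] by linarith
qed

lemma flow_uniform_bound: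
  assumes C_psd: "pos_semidef C" and pd: "\<forall>s\<in>{0..<T}. pos_def (X s)"
  shows "\<exists>\<kappa>>0. \<forall>s\<in>{0..<T}. \<forall>v. \<kappa> * (norm v)^2 \<le> v \<bullet> (X s *v v)"
proof -
  define P where "P = max 1 (inverse_pairing 0 + C \<bullet> X 0 / 2 + (C \<bullet> X 0 + real CARD('n) / 2) * T)"
  obtain k where "0 < k" and k: "\<forall>v. k * (norm v)^2 \<le> v \<bullet> (X 0 *v v)"
    using pos_def_uniform[OF X0_pd] by blast
  have "0 < P" by (simp add: P_def)
  have "k / P * (norm v)^2 \<le> v \<bullet> (X s *v v)" if s: "s \<in> {0..<T}" for s v
  proof -
    have "0 \<le> v \<bullet> (X s *v v)"
      using pos_def_imp_pos_semidef[of "X s"] pd s unfolding pos_semidef_def by blast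
    have "k * (norm v)^2 \<le> v \<bullet> (X 0 *v v)" using k by blast
    also have "\<dots> \<le> inverse_pairing s * (v \<bullet> (X s *v v))"
      using quadratic_form_le_inverse_pairing[OF pos_def_imp_pos_semidef[OF X0_pd], of "X s" v] pd s
      by (simp add: inverse_pairing_def)
    also have "\<dots> \<le> P * (v \<bullet> (X s *v v))"
      using inverse_pairing_bounded[OF C_psd pd s] \<open>0 \<le> v \<bullet> (X s *v v)\<close>
      by (intro mult_right_mono) (auto simp: P_def)
    finally show ?thesis
      using \<open>0 < P\<close> by (simp add: pos_divide_le_eq mult.commute)
  qed
  moreover have "0 < k / P" using \<open>0 < k\<close> \<open>0 < P\<close> by simp
  ultimately show ?thesis by blast
qed

theorem flow_pos_def:
  assumes "pos_semidef C" and "0 \<le> t"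
  shows "pos_def (X t)"
proof (rule pos_def_continuation[OF _ flow_symmetric X0_pd flow_uniform_bound[OF assms(1)] assms(2)])
  show "continuous_on {0..} X"
    unfolding continuous_on_eq_continuous_within
    using deriv by (auto intro: has_vector_derivative_continuous)
qed

end

theorem theorem5p2:
  fixes C :: "real^'n^'n" and A :: "'m::finite \<Rightarrow> real^'n^'n" and b :: "real^'m"
    and X Xd :: "real \<Rightarrow> real^'n^'n"
  assumes C_sym: "transpose C = C"
    and A_sym: "\<forall>l. transpose (A l) = A l"
    and C_pd: "pos_def C"
    and A_indep: "inj A \<and> independent (range A)"
    and deriv: "\<forall>t\<ge>0. (X has_vector_derivative Xd t) (at t within {0..})"
    and dyn: "\<forall>t\<ge>0. vecm (Xd t) =
       - ((mat 1 - kron (X t) (X t) ** transpose (constr_mat A)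
              ** matrix_inv (constr_mat A ** kron (X t) (X t) ** transpose (constr_mat A))
              ** constr_mat A)
          ** kron (X t) (X t)) *v vecm C"
    and X0_pd: "pos_def (X 0)"
    and X0_feas: "constr_mat A *v vecm (X 0) = b"
  shows "\<forall>t\<ge>0. pos_def (X t) \<and> constr_mat A *v vecm (X t) = b"
proof -
  interpret second_ansatz_flow C A X Xd
    by unfold_locales (use C_sym A_sym A_indep deriv dyn X0_pd in auto)
  have C_psd: "pos_semidef C" using C_pd by (rule pos_def_imp_pos_semidef)
  show ?thesis
  proof (intro allI impI conjI)
    fix t :: real assume "0 \<le> t"
    then show "pos_def (X t)" by (rule flow_pos_def[OF C_psd])
    have "constr_mat A *v vecm (X t) = constr_mat A *v vecm (X 0)"
      using \<open>0 \<le> t\<close> flow_pos_def[OF C_psd] by (intro flow_constraints) auto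
    with X0_feas show "constr_mat A *v vecm (X t) = b" by simp
  qed
qed

end
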